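(* Let $R>1$ and let $f,g:\mathbb{D}_{R}\to\mathbb{C}$ be analytic in $\mathbb{D}_{R}=\{z\in\mathbb{C}:|z|<R\}$, $f(z)=\sum_{k=0}^{\infty}a_{k}z^{k}$, $g(z)=\sum_{k=0}^{\infty}b_{k}z^{k}$. Let $1\le r<R$. Then $\sum_{m=0}^{\infty}m^{2}\big[\sum_{j=0}^{m}|a_{j}||b_{m-j}|\big]r^{m}<+\infty$ and for all $n\in\mathbb{N}$, $$\|U_{n}(fg)-U_{n}(f)U_{n}(g)\|_{r}\le\frac{4}{n}\sum_{m=0}^{\infty}m^{2}\Big[\sum_{j=0}^{m}|a_{j}||b_{m-j}|\Big]r^{m}.$$
   Context: The complex genuine Bernstein-Durrmeyer polynomials of a function $h$ continuous on $[0,1]$ are $$U_{n}(h)(z)=(n-1)\sum_{k=1}^{n-1}\Big(\int_{0}^{1}h(t)p_{n-2,k-1}(t)\,dt\Big)p_{n,k}(z)+(1-z)^{n}h(0)+z^{n}h(1),\quad z\in\mathbb{C},$$ where $p_{n,k}(z)=\binom{n}{k}z^{k}(1-z)^{n-k}$. For $h$ continuous on $\{|z|\le r\}$, $\|h\|_{r}=\max\{|h(z)|:|z|\le r\}$. *)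

theory Defs
  imports "HOL-Analysis.Analysis"
begin

definition bern :: "nat \<Rightarrow> nat \<Rightarrow> 'a::comm_ring_1 \<Rightarrow> 'a" where
  "bern n k z = of_nat (n choose k) * z ^ k * (1 - z) ^ (n - k)"

text \<open>Complex genuine Bernstein-Durrmeyer polynomial U_n(h)(z); h is only
  used through its values on [0,1] (embedded in the complex plane).
  Intended for n \<ge> 1.\<close>
definition genuine_BD :: "nat \<Rightarrow> (complex \<Rightarrow> complex) \<Rightarrow> complex \<Rightarrow> complex" where
  "genuine_BD n h z =
     of_nat (n - 1) *
       (\<Sum>k=1..n-1. integral {0..1::real}
            (\<lambda>t. h (complex_of_real t) * complex_of_real (bern (n - 2) (k - 1) t)) * bern n k z)
     + (1 - z) ^ n * h 0 + z ^ n * h 1"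

definition disk_norm :: "real \<Rightarrow> (complex \<Rightarrow> complex) \<Rightarrow> real" where
  "disk_norm r h = Sup ((\<lambda>z. norm (h z)) ` cball 0 r)"

end

theory Submission
  imports Defs "HOL-Real_Asymp.Real_Asymp"
begin

text \<open>
  The operator \<open>U\<^sub>n\<close> maps \<open>e\<^sub>m(z) = z\<^sup>m\<close> to a convex combination of \<open>e\<^sub>0, \<dots>, e\<^sub>m\<close>: expanding
  the rising factorial in the Bernstein moments into falling factorials, the weight of \<open>e\<^sub>i\<close> is
  a Lah number times \<open>n(n-1)\<cdots>(n-i+1) / n(n+1)\<cdots>(n+m-1)\<close>, and the weight missing from \<open>e\<^sub>m\<close>
  is at most \<open>m\<^sup>2/n\<close>. Hence on \<open>|z| \<le> r\<close> we get \<open>|U\<^sub>n(e\<^sub>m)| \<le> r\<^sup>m\<close> and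
  \<open>|U\<^sub>n(e\<^sub>m) - e\<^sub>m| \<le> 2m\<^sup>2r\<^sup>m/n\<close>, so \<open>|U\<^sub>n(e\<^sub>j\<^sub>+\<^sub>l) - U\<^sub>n(e\<^sub>j)U\<^sub>n(e\<^sub>l)| \<le> 4(j+l)\<^sup>2r\<^sup>j\<^sup>+\<^sup>l/n\<close>.
  Since the power series of \<open>f\<close>, \<open>g\<close> and \<open>fg\<close> converge uniformly on \<open>[0,1]\<close>, \<open>U\<^sub>n\<close> can be applied
  termwise, and \<open>U\<^sub>n(fg) - U\<^sub>n(f)U\<^sub>n(g) = \<Sum>\<^sub>m \<Sum>\<^sub>j a\<^sub>j b\<^sub>m\<^sub>-\<^sub>j (U\<^sub>n(e\<^sub>m) - U\<^sub>n(e\<^sub>j)U\<^sub>n(e\<^sub>m\<^sub>-\<^sub>j))\<close> is estimated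
  term by term. Holomorphy of \<open>f\<close> and \<open>g\<close> is used only through the given expansions.
\<close>

definition ffact :: "'a::comm_ring_1 \<Rightarrow> nat \<Rightarrow> 'a" where
  "ffact x i = (\<Prod>j<i. x - of_nat j)"

lemma ffact_0 [simp]: "ffact x 0 = 1"
  by (simp add: ffact_def)

lemma ffact_Suc: "ffact x (Suc i) = ffact x i * (x - of_nat i)"
  by (simp add: ffact_def)

lemma ffact_Suc_shift: "ffact x (Suc i) = x * ffact (x - 1) i"
  unfolding ffact_def prod.lessThan_Suc_shift by (simp add: algebra_simps)

lemma ffact_of_real: "ffact (of_real x :: 'a::{real_algebra_1, comm_ring_1}) i = of_real (ffact x i)"
  by (simp add: ffact_def)

fun lah :: "nat \<Rightarrow> nat \<Rightarrow> nat" where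
  "lah 0 i = (if i = 0 then 1 else 0)"
| "lah (Suc m) 0 = m * lah m 0"
| "lah (Suc m) (Suc i) = (m + Suc i) * lah m (Suc i) + lah m i"

lemma lah_eq_0: "m < i \<Longrightarrow> lah m i = 0"
  by (induction m i rule: lah.induct) auto

lemma lah_diag [simp]: "lah m m = 1"
  by (induction m) (auto simp: lah_eq_0)

lemma lah_Suc: "lah (Suc m) i = (if i = 0 then 0 else lah m (i - 1)) + (m + i) * lah m i"
  by (cases i) auto

lemma pochhammer_eq_sum_lah_ffact:
  "pochhammer (x::'a::comm_ring_1) m = (\<Sum>i\<le>m. of_nat (lah m i) * ffact x i)"
proof (induction m)
  case 0
  then show ?case by simp
next
  case (Suc m)
  have "pochhammer x (Suc m) = (\<Sum>i\<le>m. of_nat (lah m i) * ffact x i * (x + of_nat m))"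
    by (simp add: pochhammer_Suc Suc sum_distrib_right)
  also have "\<dots> = (\<Sum>i\<le>m. of_nat (lah m i) * ffact x (Suc i))
                 + (\<Sum>i\<le>m. of_nat ((m + i) * lah m i) * ffact x i)"
    unfolding sum.distrib[symmetric] by (rule sum.cong) (auto simp: ffact_Suc algebra_simps)
  also have "(\<Sum>i\<le>m. of_nat (lah m i) * ffact x (Suc i))
      = (\<Sum>i\<le>Suc m. of_nat (if i = 0 then 0 else lah m (i - 1)) * ffact x i)"
    by (subst sum.atMost_Suc_shift) simp
  also have "(\<Sum>i\<le>m. of_nat ((m + i) * lah m i) * ffact x i)
      = (\<Sum>i\<le>Suc m. of_nat ((m + i) * lah m i) * ffact x i)"
    by (simp add: lah_eq_0)
  also have "(\<Sum>i\<le>Suc m. of_nat (if i = 0 then 0 else lah m (i - 1)) * ffact x i)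
      + (\<Sum>i\<le>Suc m. of_nat ((m + i) * lah m i) * ffact x i)
      = (\<Sum>i\<le>Suc m. of_nat (lah (Suc m) i) * ffact x i)"
    unfolding lah_Suc of_nat_add distrib_right sum.distrib ..
  finally show ?case .
qed

lemma ffact_of_nat_nonneg: "0 \<le> ffact (real n) m"
proof (cases "m \<le> n")
  case True
  then show ?thesis unfolding ffact_def by (intro prod_nonneg) auto
next
  case False
  then have "ffact (real n) m = 0"
    unfolding ffact_def by (intro prod_zero) auto
  then show ?thesis by simp
qed

lemma ffact_of_nat_le_pochhammer: "ffact (real n) m \<le> pochhammer (real n) m"
proof (cases "m \<le> n")
  case True
  then show ?thesis unfolding ffact_def pochhammer_prod atLeast0LessThan
    by (intro prod_mono) auto
next
  case False
  then have "ffact (real n) m = 0"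
    unfolding ffact_def by (intro prod_zero) auto
  then show ?thesis unfolding pochhammer_prod by (simp add: prod_nonneg)
qed

lemma pochhammer_minus_ffact_le:
  assumes "n \<ge> 1"
  shows "pochhammer (real n) m - ffact (real n) m \<le> real m * (real m - 1) / real n * pochhammer (real n) m"
proof (induction m)
  case 0
  then show ?case by simp
next
  case (Suc m)
  define P where "P = pochhammer (real n) m"
  define F where "F = ffact (real n) m"
  have n: "real n \<ge> 1" using assms by simp
  then have nz: "real n \<noteq> 0" by simp
  have FP: "F \<le> P" unfolding F_def P_def by (rule ffact_of_nat_le_pochhammer)
  have P0: "0 \<le> P" unfolding P_def using assms by (intro pochhammer_nonneg) simp
  have "pochhammer (real n) (Suc m) - ffact (real n) (Suc m) = (real n + real m) * (P - F) + 2 * real m * F"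
    by (simp add: pochhammer_Suc ffact_Suc P_def F_def algebra_simps)
  also have "\<dots> \<le> (real n + real m) * (real m * (real m - 1) / real n * P) + 2 * real m * P"
    using Suc FP unfolding P_def F_def by (intro add_mono mult_left_mono) auto
  also have "\<dots> = (real m * (real m - 1) * (real n + real m) + 2 * real m * real n) / real n * P"
    using nz by (simp add: field_simps)
  also have "\<dots> \<le> real m * (real m + 1) * (real n + real m) / real n * P"
    using n P0 by (intro mult_right_mono divide_right_mono) (auto simp: algebra_simps)
  also have "\<dots> = real (Suc m) * (real (Suc m) - 1) / real n * pochhammer (real n) (Suc m)"
    using nz by (simp add: pochhammer_Suc P_def field_simps)
  finally show ?case .
qed

lemma sum_bern_eq_1: "(\<Sum>k\<le>n. bern n k z) = (1::'a::comm_ring_1)"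
proof -
  have "(\<Sum>k\<le>n. bern n k z) = (z + (1 - z)) ^ n"
    unfolding binomial_ring bern_def by simp
  then show ?thesis by simp
qed

lemma bern_Suc_Suc:
  "of_nat (Suc k) * bern (Suc n) (Suc k) z = of_nat (Suc n) * z * bern n k (z::'a::comm_ring_1)"
proof -
  have "of_nat (Suc k) * of_nat (Suc n choose Suc k) = (of_nat (Suc n) * of_nat (n choose k) :: 'a)"
    by (metis Suc_times_binomial_eq mult.commute of_nat_mult)
  then have "of_nat (Suc k) * of_nat (Suc n choose Suc k) * (z * z ^ k * (1 - z) ^ (n - k))
      = of_nat (Suc n) * of_nat (n choose k) * (z * z ^ k * (1 - z) ^ (n - k))"
    by simp
  then show ?thesis
    unfolding bern_def by (simp add: mult_ac)
qed

lemma sum_bern_ffact: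
  "(\<Sum>k\<le>n. bern n k z * ffact (of_nat k) i) = ffact (of_nat n) i * (z::'a::comm_ring_1) ^ i"
proof (induction i arbitrary: n)
  case 0
  then show ?case by (simp add: sum_bern_eq_1)
next
  case (Suc i)
  show ?case
  proof (cases n)
    case 0
    then show ?thesis by (simp add: ffact_Suc_shift)
  next
    case (Suc n')
    have "(\<Sum>k\<le>n. bern n k z * ffact (of_nat k) (Suc i))
        = (\<Sum>k\<le>n'. of_nat (Suc k) * bern (Suc n') (Suc k) z * ffact (of_nat k) i)"
      unfolding Suc by (subst sum.atMost_Suc_shift) (simp add: ffact_Suc_shift mult_ac)
    also have "\<dots> = of_nat (Suc n') * z * (\<Sum>k\<le>n'. bern n' k z * ffact (of_nat k) i)"
      unfolding bern_Suc_Suc sum_distrib_left by (simp add: mult_ac)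
    also have "\<dots> = ffact (of_nat n) (Suc i) * z ^ Suc i"
      unfolding Suc.IH Suc by (simp add: ffact_Suc_shift mult_ac)
    finally show ?thesis .
  qed
qed

lemma sum_bern_pochhammer:
  "(\<Sum>k\<le>n. bern n k z * pochhammer (of_nat k) m)
     = (\<Sum>i\<le>m. of_nat (lah m i) * ffact (of_nat n) i * (z::'a::comm_ring_1) ^ i)"
proof -
  have "(\<Sum>k\<le>n. bern n k z * pochhammer (of_nat k) m)
      = (\<Sum>i\<le>m. of_nat (lah m i) * (\<Sum>k\<le>n. bern n k z * ffact (of_nat k) i))"
    unfolding pochhammer_eq_sum_lah_ffact sum_distrib_left
    by (subst sum.swap) (simp add: mult_ac)
  then show ?thesis by (simp add: sum_bern_ffact mult.assoc)
qed

lemma norm_power_le_power_of_le: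
  fixes z :: "'a::real_normed_div_algebra"
  assumes "norm z \<le> r" "1 \<le> r" "i \<le> m"
  shows "norm (z ^ i) \<le> r ^ m"
proof -
  have "norm (z ^ i) \<le> r ^ i" unfolding norm_power by (intro power_mono) (use assms in auto)
  also have "\<dots> \<le> r ^ m" using assms by (intro power_increasing) auto
  finally show ?thesis .
qed

lemma norm_sum_weighted_powers_le:
  fixes z :: "'a::real_normed_div_algebra"
  assumes "\<And>i. 0 \<le> w i" "norm z \<le> r" "1 \<le> r" "I \<subseteq> {..m}"
  shows "norm (\<Sum>i\<in>I. of_real (w i) * z ^ i) \<le> (\<Sum>i\<in>I. w i) * r ^ m"
proof -
  have "norm (\<Sum>i\<in>I. of_real (w i) * z ^ i) \<le> (\<Sum>i\<in>I. norm (of_real (w i) * z ^ i))"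
    by (rule norm_sum)
  also have "\<dots> \<le> (\<Sum>i\<in>I. w i * r ^ m)"
    using assms norm_power_le_power_of_le[OF assms(2,3)]
    by (intro sum_mono) (auto simp: norm_mult intro!: mult_left_mono)
  finally show ?thesis by (simp add: sum_distrib_right)
qed

lemma norm_convex_powers_minus_power_le:
  fixes z :: "'a::real_normed_div_algebra"
  assumes "\<And>i. 0 \<le> w i" "(\<Sum>i\<le>m. w i) = 1" "norm z \<le> r" "1 \<le> r"
  shows "norm ((\<Sum>i\<le>m. of_real (w i) * z ^ i) - z ^ m) \<le> 2 * (1 - w m) * r ^ m"
proof -
  have low: "(\<Sum>i<m. w i) = 1 - w m"
    using assms(2) by (simp add: lessThan_Suc_atMost[symmetric])
  then have top: "w m \<le> 1" using assms(1) by (metis diff_ge_0_iff_ge sum_nonneg)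
  have "(\<Sum>i\<le>m. of_real (w i) * z ^ i) - z ^ m = (\<Sum>i<m. of_real (w i) * z ^ i) - of_real (1 - w m) * z ^ m"
    by (simp add: lessThan_Suc_atMost[symmetric] algebra_simps)
  also have "norm \<dots> \<le> norm (\<Sum>i<m. of_real (w i) * z ^ i) + norm (of_real (1 - w m) * z ^ m)"
    by (rule norm_triangle_ineq4)
  also have "\<dots> \<le> (1 - w m) * r ^ m + (1 - w m) * r ^ m"
  proof (rule add_mono)
    show "norm (\<Sum>i<m. of_real (w i) * z ^ i) \<le> (1 - w m) * r ^ m"
      using norm_sum_weighted_powers_le[of w z r "{..<m}" m] assms low by fastforce
    have "\<bar>1 - w m\<bar> * norm (z ^ m) \<le> (1 - w m) * r ^ m"
      using top norm_power_le_power_of_le[OF assms(3,4) order_refl] by (auto intro: mult_left_mono)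
    then show "norm (of_real (1 - w m) * z ^ m) \<le> (1 - w m) * r ^ m"
      by (simp only: norm_mult norm_of_real)
  qed
  finally show ?thesis by (simp add: algebra_simps)
qed

lemma norm_mult_defect_le_of_power_approx:
  fixes u :: "nat \<Rightarrow> 'a::real_normed_field"
  assumes z: "norm z \<le> r" and c: "0 \<le> c"
    and bound: "\<And>m. norm (u m) \<le> r ^ m"
    and approx: "\<And>m. norm (u m - z ^ m) \<le> c * real m ^ 2 * r ^ m"
  shows "norm (u (j + l) - u j * u l) \<le> 2 * c * real (j + l) ^ 2 * r ^ (j + l)"
proof -
  have r: "0 \<le> r" using z norm_ge_zero order_trans by blast
  have zr: "norm (z ^ i) \<le> r ^ i" for i
    unfolding norm_power using z by (intro power_mono) auto
  have t1: "norm (u (j + l) - z ^ (j + l)) \<le> c * real (j + l) ^ 2 * r ^ (j + l)"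
    by (rule approx)
  have t2: "norm (z ^ j * (z ^ l - u l)) \<le> c * real l ^ 2 * r ^ (j + l)"
  proof -
    have "norm (z ^ j * (z ^ l - u l)) \<le> r ^ j * (c * real l ^ 2 * r ^ l)"
      unfolding norm_mult norm_minus_commute[of "z ^ l"] using r
      by (intro mult_mono zr approx) auto
    then show ?thesis by (simp add: power_add mult_ac)
  qed
  have t3: "norm (u l * (z ^ j - u j)) \<le> c * real j ^ 2 * r ^ (j + l)"
  proof -
    have "norm (u l * (z ^ j - u j)) \<le> r ^ l * (c * real j ^ 2 * r ^ j)"
      unfolding norm_mult norm_minus_commute[of "z ^ j"] using r
      by (intro mult_mono bound approx) auto
    then show ?thesis by (simp add: power_add mult_ac)
  qed
  have "u (j + l) - u j * u l = (u (j + l) - z ^ (j + l)) + z ^ j * (z ^ l - u l) + u l * (z ^ j - u j)"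
    by (simp add: power_add algebra_simps)
  also have "norm \<dots> \<le> c * real (j + l) ^ 2 * r ^ (j + l) + c * real l ^ 2 * r ^ (j + l)
      + c * real j ^ 2 * r ^ (j + l)"
    by (intro norm_triangle_le add_mono[OF norm_triangle_le[OF add_mono[OF t1 t2]] t3])
  also have "\<dots> = c * (real (j + l) ^ 2 + real l ^ 2 + real j ^ 2) * r ^ (j + l)"
    by (simp add: algebra_simps)
  also have "\<dots> \<le> c * (2 * real (j + l) ^ 2) * r ^ (j + l)"
    using c r by (intro mult_right_mono mult_left_mono) (auto simp: power2_eq_square algebra_simps)
  finally show ?thesis by simp
qed

definition BD_weight :: "nat \<Rightarrow> nat \<Rightarrow> nat \<Rightarrow> real" where
  "BD_weight n m i = real (lah m i) * ffact (real n) i / pochhammer (real n) m"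

lemma BD_weight_nonneg: "0 \<le> BD_weight n m i"
  unfolding BD_weight_def pochhammer_prod
  by (intro divide_nonneg_nonneg mult_nonneg_nonneg ffact_of_nat_nonneg prod_nonneg) auto

lemma sum_BD_weight: "n \<ge> 1 \<Longrightarrow> (\<Sum>i\<le>m. BD_weight n m i) = 1"
  unfolding BD_weight_def sum_divide_distrib[symmetric] pochhammer_eq_sum_lah_ffact[symmetric]
  by (simp add: pochhammer_eq_0_iff)

lemma one_minus_BD_weight_top_le:
  assumes "n \<ge> 1"
  shows "1 - BD_weight n m m \<le> real m ^ 2 / real n"
proof -
  have P: "0 < pochhammer (real n) m" using assms by (intro pochhammer_pos) auto
  have "1 - BD_weight n m m = (pochhammer (real n) m - ffact (real n) m) / pochhammer (real n) m"
    unfolding BD_weight_def using P by (simp add: field_simps)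
  also have "\<dots> \<le> real m * (real m - 1) / real n"
    using pochhammer_minus_ffact_le[OF assms, of m] P by (simp add: divide_le_eq)
  also have "\<dots> \<le> real m ^ 2 / real n"
    by (intro divide_right_mono) (auto simp: power2_eq_square algebra_simps)
  finally show ?thesis .
qed

definition BD_monomial :: "nat \<Rightarrow> nat \<Rightarrow> complex \<Rightarrow> complex" where
  "BD_monomial n m z = (\<Sum>i\<le>m. of_real (BD_weight n m i) * z ^ i)"

lemma norm_BD_monomial_le:
  assumes "n \<ge> 1" "norm z \<le> r" "1 \<le> r"
  shows "norm (BD_monomial n m z) \<le> r ^ m"
  using norm_sum_weighted_powers_le[where w = "BD_weight n m" and m = m,
      OF BD_weight_nonneg assms(2,3) order_refl]
  unfolding BD_monomial_def sum_BD_weight[OF assms(1)] by simp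

lemma norm_BD_monomial_minus_power_le:
  assumes "n \<ge> 1" "norm z \<le> r" "1 \<le> r"
  shows "norm (BD_monomial n m z - z ^ m) \<le> 2 / real n * real m ^ 2 * r ^ m"
proof -
  have "norm (BD_monomial n m z - z ^ m) \<le> 2 * (1 - BD_weight n m m) * r ^ m"
    unfolding BD_monomial_def
    by (rule norm_convex_powers_minus_power_le[where w = "BD_weight n m",
          OF BD_weight_nonneg sum_BD_weight[OF assms(1)] assms(2,3)])
  also have "\<dots> \<le> 2 * (real m ^ 2 / real n) * r ^ m"
    using one_minus_BD_weight_top_le[OF assms(1)] assms(3) by (intro mult_right_mono mult_left_mono) auto
  finally show ?thesis by simp
qed

lemma norm_BD_monomial_mult_defect_le:
  assumes "n \<ge> 1" "norm z \<le> r" "1 \<le> r"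
  shows "norm (BD_monomial n (j + l) z - BD_monomial n j z * BD_monomial n l z)
    \<le> 4 / real n * real (j + l) ^ 2 * r ^ (j + l)"
proof -
  have "norm (BD_monomial n (j + l) z - BD_monomial n j z * BD_monomial n l z)
      \<le> 2 * (2 / real n) * real (j + l) ^ 2 * r ^ (j + l)"
    by (rule norm_mult_defect_le_of_power_approx)
      (use assms norm_BD_monomial_le[OF assms] norm_BD_monomial_minus_power_le[OF assms] in auto)
  then show ?thesis by simp
qed

lemma summable_norm_powser_coeff:
  fixes c :: "nat \<Rightarrow> complex"
  assumes hs: "\<And>z. z \<in> ball 0 R \<Longrightarrow> (\<lambda>k. c k * z ^ k) sums h z" and "0 \<le> \<rho>" "\<rho> < R"
  shows "summable (\<lambda>k. norm (c k) * \<rho> ^ k)"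
proof -
  define x where "x = complex_of_real ((\<rho> + R) / 2)"
  have nx: "norm x = (\<rho> + R) / 2" unfolding x_def norm_of_real using assms(2,3) by simp
  then have "x \<in> ball 0 R" using assms(2,3) by simp
  then have "summable (\<lambda>k. c k * x ^ k)" by (rule sums_summable[OF hs])
  moreover have "norm (complex_of_real \<rho>) < norm x" using nx assms(2,3) by simp
  ultimately show ?thesis
    using powser_insidea[of c x "complex_of_real \<rho>"] assms(2) by (simp add: norm_mult norm_power)
qed

lemma has_integral_power_mult_power:
  "((\<lambda>t::real. t ^ a * (1 - t) ^ b) has_integral (fact a * fact b / fact (a + b + 1))) {0..1}"
proof -
  have "Beta (real a + 1) (real b + 1) = fact a * fact b / fact (a + b + 1)"
  proof -
    have "Gamma (real a + 1) = fact a" "Gamma (real b + 1) = fact b"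
      "Gamma (real a + 1 + (real b + 1)) = fact (a + b + 1)"
      using Gamma_fact[of a] Gamma_fact[of b] Gamma_fact[of "a + b + 1"] by (simp_all add: algebra_simps)
    then show ?thesis unfolding Beta_def by simp
  qed
  then have "((\<lambda>t. t powr real a * (1 - t) powr real b) has_integral (fact a * fact b / fact (a + b + 1))) {0..1}"
    using has_integral_Beta_real[of "real a + 1" "real b + 1"] by simp
  then show ?thesis
    by (rule has_integral_spike_finite[where S = "{0, 1}", rotated 2]) (auto simp: powr_realpow)
qed

lemma pochhammer_of_Suc: "pochhammer (real (Suc k)) m = fact (k + m) / fact k"
  using pochhammer_product'[of "1::real" k m] by (simp add: pochhammer_fact[symmetric] add.commute)

lemma integral_power_mult_bern:
  "real (k + b + 1) * integral {0..1} (\<lambda>t::real. t ^ m * bern (k + b) k t)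
     = pochhammer (real (Suc k)) m / pochhammer (real (k + b + 2)) m"
proof -
  have "(\<lambda>t::real. t ^ m * bern (k + b) k t) = (\<lambda>t. of_nat (k + b choose k) * (t ^ (m + k) * (1 - t) ^ b))"
    by (auto simp: bern_def power_add algebra_simps)
  then have I: "integral {0..1} (\<lambda>t::real. t ^ m * bern (k + b) k t) =
      of_nat (k + b choose k) * (fact (m + k) * fact b / fact (m + k + b + 1))"
    by (simp only:) (intro integral_unique has_integral_mult_right has_integral_power_mult_power)
  have p: "pochhammer (real (k + b + 2)) m = fact (k + b + 1 + m) / fact (k + b + 1)"
    using pochhammer_of_Suc[of "k + b + 1" m] by (simp add: algebra_simps)
  have c: "(of_nat (k + b choose k) :: real) = fact (k + b) / (fact k * fact b)"
    by (subst binomial_fact) auto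
  have f: "(fact (k + b + 1) :: real) = real (k + b + 1) * fact (k + b)"
    by (simp add: algebra_simps)
  have e: "m + k = k + m" "k + m + b + 1 = k + b + 1 + m" by simp_all
  have field: "q * (F / (K * B) * (M * B / X)) = (M / K) / (X / (q * F))"
    if "K \<noteq> 0" "B \<noteq> 0" "X \<noteq> 0" "q \<noteq> 0" "F \<noteq> 0" for q F K B M X :: real
    using that by (simp add: field_simps)
  show ?thesis unfolding I p pochhammer_of_Suc c f e
    by (rule field) auto
qed

text \<open>A power series converging on a disc of radius \<open>R > 1\<close> converges uniformly on \<open>[0,1]\<close>,
  so it may be integrated termwise against a continuous weight.\<close>

lemma sums_integral_powser_mult:
  fixes c :: "nat \<Rightarrow> complex" and B :: "real \<Rightarrow> complex"
  assumes R: "R > 1" and hs: "\<And>z. z \<in> ball 0 R \<Longrightarrow> (\<lambda>k. c k * z ^ k) sums h z"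
    and B: "continuous_on {0..1} B"
  shows "(\<lambda>j. c j * integral {0..1} (\<lambda>t. of_real t ^ j * B t))
           sums integral {0..1} (\<lambda>t. h (of_real t) * B t)"
proof -
  obtain M where M: "\<And>t. t \<in> {0..1} \<Longrightarrow> norm (B t) \<le> M"
    using continuous_on_compact_bound[OF compact_Icc B] by blast
  have sc: "summable (\<lambda>k. norm (c k))"
    using summable_norm_powser_coeff[where \<rho> = 1, OF hs] R by simp
  define f where "f j t = c j * of_real t ^ j * B t" for j t
  have u: "uniform_limit {0..1} (\<lambda>N t. \<Sum>j<N. f j t) (\<lambda>t. \<Sum>j. f j t) sequentially"
  proof (rule Weierstrass_m_test)
    show "summable (\<lambda>j. norm (c j) * M)" using sc by (rule summable_mult2)
    fix j and t :: real
    assume t: "t \<in> {0..1}"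
    have "norm (f j t) = norm (c j) * \<bar>t\<bar> ^ j * norm (B t)" by (simp add: f_def norm_mult norm_power)
    also have "\<dots> \<le> norm (c j) * 1 * M"
      using t M[OF t] by (intro mult_mono power_le_one) auto
    finally show "norm (f j t) \<le> norm (c j) * M" by simp
  qed
  have lim: "(\<Sum>j. f j t) = h (of_real t) * B t" if "t \<in> {0..1}" for t
  proof -
    have "of_real t \<in> ball (0::complex) R" using that R by auto
    from sums_mult2[OF hs[OF this], of "B t"] show ?thesis
      unfolding f_def by (simp add: sums_iff)
  qed
  have ul: "uniform_limit {0..1} (\<lambda>N t. \<Sum>j<N. f j t) (\<lambda>t. h (of_real t) * B t) sequentially"
    by (rule uniform_limit_cong[THEN iffD1, OF _ _ u]) (auto simp: lim)
  have fc: "continuous_on {0..1} (\<lambda>t. \<Sum>j<N. f j t)" for N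
    unfolding f_def using B by (intro continuous_intros) auto
  obtain I J where I: "\<And>N. ((\<lambda>t. \<Sum>j<N. f j t) has_integral I N) {0..1}"
    and J: "((\<lambda>t. h (of_real t) * B t) has_integral J) {0..1}" and IJ: "I \<longlonglongrightarrow> J"
    using uniform_limit_integral[OF ul fc] by auto
  have "(f j has_integral c j * integral {0..1} (\<lambda>t. of_real t ^ j * B t)) {0..1}" for j
  proof -
    have "(\<lambda>t. of_real t ^ j * B t) integrable_on {0..1}"
      using B by (intro integrable_continuous_interval continuous_intros) auto
    then show ?thesis unfolding f_def mult.assoc by (intro has_integral_mult_right integrable_integral)
  qed
  then have "I = (\<lambda>N. \<Sum>j<N. c j * integral {0..1} (\<lambda>t. of_real t ^ j * B t))"
    using has_integral_unique[OF I has_integral_sum] by auto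
  with IJ J show ?thesis unfolding sums_def by (simp add: integral_unique)
qed

definition BD_coeff :: "nat \<Rightarrow> (complex \<Rightarrow> complex) \<Rightarrow> nat \<Rightarrow> complex" where
  "BD_coeff n h k = (if k = 0 then h 0 else if k = n then h 1 else
      of_nat (n - 1) * integral {0..1::real} (\<lambda>t. h (of_real t) * of_real (bern (n - 2) (k - 1) t)))"

lemma genuine_BD_eq_sum_bern:
  assumes "n \<ge> 1"
  shows "genuine_BD n h z = (\<Sum>k\<le>n. BD_coeff n h k * bern n k z)"
proof -
  obtain n' where n: "n = Suc n'" using assms by (cases n) auto
  have "(\<Sum>k\<le>n. BD_coeff n h k * bern n k z) = BD_coeff n h 0 * bern n 0 z
      + (\<Sum>k<n'. BD_coeff n h (Suc k) * bern n (Suc k) z) + BD_coeff n h n * bern n n z"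
    unfolding n by (subst sum.atMost_Suc_shift) (simp add: lessThan_Suc_atMost[symmetric])
  also have "(\<Sum>k<n'. BD_coeff n h (Suc k) * bern n (Suc k) z) = of_nat (n - 1) *
       (\<Sum>k=1..n-1. integral {0..1::real}
            (\<lambda>t. h (of_real t) * of_real (bern (n - 2) (k - 1) t)) * bern n k z)"
    unfolding n by (simp add: sum.atLeast1_atMost_eq sum_distrib_left BD_coeff_def algebra_simps)
  finally show ?thesis
    unfolding genuine_BD_def using assms by (simp add: BD_coeff_def bern_def algebra_simps)
qed

lemma BD_coeff_power:
  assumes "n \<ge> 1" "k \<le> n"
  shows "BD_coeff n (\<lambda>w. w ^ m) k = of_real (pochhammer (real k) m / pochhammer (real n) m)"
proof -
  have P: "pochhammer (real n) m > 0" using assms by (intro pochhammer_pos) auto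
  consider "k = 0" | "k = n" | "0 < k" "k < n" using assms by linarith
  then show ?thesis
  proof cases
    case 1
    then show ?thesis using assms by (simp add: BD_coeff_def pochhammer_0_left)
  next
    case 2
    then show ?thesis using assms P by (simp add: BD_coeff_def)
  next
    case 3
    define k' b where "k' = k - 1" and "b = n - k - 1"
    have k: "k = Suc k'" and nb: "n = k' + b + 2" using 3 unfolding k'_def b_def by auto
    have "(\<lambda>t::real. t ^ m * bern (k' + b) k' t) integrable_on {0..1}"
      unfolding bern_def by (intro integrable_continuous_interval continuous_intros)
    then have "integral {0..1} (\<lambda>t. of_real (t ^ m * bern (k' + b) k' t))
        = complex_of_real (integral {0..1} (\<lambda>t. t ^ m * bern (k' + b) k' t))"
      by (intro integral_unique has_integral_of_real integrable_integral)
    then have "integral {0..1} (\<lambda>t. complex_of_real t ^ m * of_real (bern (n - 2) (k - 1) t))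
        = of_real (integral {0..1} (\<lambda>t. t ^ m * bern (k' + b) k' t))"
      unfolding k nb by simp
    then have "BD_coeff n (\<lambda>w. w ^ m) k
        = of_real (real (k' + b + 1) * integral {0..1} (\<lambda>t. t ^ m * bern (k' + b) k' t))"
      using 3 unfolding BD_coeff_def by (simp add: nb)
    also have "\<dots> = of_real (pochhammer (real k) m / pochhammer (real n) m)"
      unfolding integral_power_mult_bern k nb by (simp add: add.commute add.left_commute)
    finally show ?thesis .
  qed
qed

lemma genuine_BD_power:
  assumes "n \<ge> 1"
  shows "genuine_BD n (\<lambda>w. w ^ m) z = BD_monomial n m z"
proof -
  have "genuine_BD n (\<lambda>w. w ^ m) z
      = (\<Sum>k\<le>n. bern n k z * pochhammer (of_nat k) m) / pochhammer (of_nat n) m"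
    unfolding genuine_BD_eq_sum_bern[OF assms] sum_divide_distrib
    by (intro sum.cong refl)
      (simp add: BD_coeff_power[OF assms] pochhammer_of_real[symmetric] field_simps)
  also have "\<dots> = BD_monomial n m z"
    unfolding sum_bern_pochhammer BD_monomial_def BD_weight_def sum_divide_distrib
    by (intro sum.cong refl) (simp add: ffact_of_real[symmetric] pochhammer_of_real[symmetric] field_simps)
  finally show ?thesis .
qed

lemma sums_genuine_BD:
  fixes c :: "nat \<Rightarrow> complex"
  assumes R: "R > 1" and hs: "\<And>z. z \<in> ball 0 R \<Longrightarrow> (\<lambda>k. c k * z ^ k) sums h z" and n: "n \<ge> 1"
  shows "(\<lambda>j. c j * BD_monomial n j z) sums genuine_BD n h z"
proof -
  have "(\<lambda>j. c j * BD_coeff n (\<lambda>w. w ^ j) k) sums BD_coeff n h k" for k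
  proof -
    consider "k = 0" | "k = n" | "k \<noteq> 0" "k \<noteq> n" by blast
    then show ?thesis
    proof cases
      case 1
      then show ?thesis using hs[of 0] R by (simp add: BD_coeff_def)
    next
      case 2
      then show ?thesis using hs[of 1] R n by (simp add: BD_coeff_def)
    next
      case 3
      have "(\<lambda>j. of_nat (n - 1) * (c j * integral {0..1}
            (\<lambda>t. of_real t ^ j * of_real (bern (n - 2) (k - 1) t))))
          sums (of_nat (n - 1) * integral {0..1} (\<lambda>t. h (of_real t) * of_real (bern (n - 2) (k - 1) t)))"
        unfolding bern_def by (intro sums_mult sums_integral_powser_mult[OF R hs] continuous_intros)
      then show ?thesis using 3 unfolding BD_coeff_def by (simp add: mult.left_commute)
    qed
  qed
  then have "(\<lambda>j. \<Sum>k\<le>n. c j * BD_coeff n (\<lambda>w. w ^ j) k * bern n k z) sums genuine_BD n h z"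
    unfolding genuine_BD_eq_sum_bern[OF n] by (intro sums_sum sums_mult2)
  moreover have "(\<Sum>k\<le>n. c j * BD_coeff n (\<lambda>w. w ^ j) k * bern n k z) = c j * BD_monomial n j z" for j
    unfolding genuine_BD_power[OF n, symmetric] genuine_BD_eq_sum_bern[OF n] sum_distrib_left
    by (simp add: mult.assoc)
  ultimately show ?thesis by simp
qed

lemma sums_powser_mult:
  fixes a b :: "nat \<Rightarrow> 'a::{real_normed_field, banach}"
  assumes "summable (\<lambda>k. norm (a k * z ^ k))" "summable (\<lambda>k. norm (b k * z ^ k))"
  shows "(\<lambda>m. (\<Sum>j\<le>m. a j * b (m - j)) * z ^ m) sums ((\<Sum>k. a k * z ^ k) * (\<Sum>k. b k * z ^ k))"
proof -
  have "(\<Sum>j\<le>m. (a j * z ^ j) * (b (m - j) * z ^ (m - j))) = (\<Sum>j\<le>m. a j * b (m - j)) * z ^ m" for m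
    unfolding sum_distrib_right by (intro sum.cong refl) (auto simp: power_add[symmetric] algebra_simps)
  then show ?thesis using Cauchy_product_sums[OF assms] by simp
qed

lemma norm_suminf_mult_defect_le:
  fixes a b u :: "nat \<Rightarrow> 'a::{real_normed_field, banach}" and D :: "nat \<Rightarrow> real"
  assumes sa: "summable (\<lambda>j. norm (a j * u j))" and sb: "summable (\<lambda>j. norm (b j * u j))"
    and sc: "(\<lambda>m. (\<Sum>j\<le>m. a j * b (m - j)) * u m) sums P"
    and defect: "\<And>j l. norm (u (j + l) - u j * u l) \<le> D (j + l)"
    and sD: "summable (\<lambda>m. (\<Sum>j\<le>m. norm (a j) * norm (b (m - j))) * D m)"
  shows "norm (P - (\<Sum>j. a j * u j) * (\<Sum>j. b j * u j))
    \<le> (\<Sum>m. (\<Sum>j\<le>m. norm (a j) * norm (b (m - j))) * D m)"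
proof -
  define d where "d m = (\<Sum>i\<le>m. a i * b (m - i) * (u m - u i * u (m - i)))" for m
  have "(\<lambda>m. \<Sum>i\<le>m. (a i * u i) * (b (m - i) * u (m - i))) sums ((\<Sum>j. a j * u j) * (\<Sum>j. b j * u j))"
    by (rule Cauchy_product_sums[OF sa sb])
  from sums_diff[OF sc this] have "d sums (P - (\<Sum>j. a j * u j) * (\<Sum>j. b j * u j))"
    unfolding d_def sum_distrib_right sum_subtractf[symmetric] by (simp add: algebra_simps)
  moreover have dle: "norm (d m) \<le> (\<Sum>j\<le>m. norm (a j) * norm (b (m - j))) * D m" for m
  proof -
    have "norm (d m) \<le> (\<Sum>i\<le>m. norm (a i) * norm (b (m - i)) * norm (u m - u i * u (m - i)))"
      unfolding d_def norm_mult[symmetric] by (rule norm_sum)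
    also have "\<dots> \<le> (\<Sum>i\<le>m. norm (a i) * norm (b (m - i)) * D m)"
    proof (rule sum_mono)
      fix i
      assume "i \<in> {..m}"
      then have "norm (u m - u i * u (m - i)) \<le> D m" using defect[of i "m - i"] by simp
      then show "norm (a i) * norm (b (m - i)) * norm (u m - u i * u (m - i))
          \<le> norm (a i) * norm (b (m - i)) * D m"
        by (intro mult_left_mono) auto
    qed
    finally show ?thesis by (simp add: sum_distrib_right)
  qed
  moreover have "summable (\<lambda>m. norm (d m))"
    by (rule summable_comparison_test'[OF sD]) (use dle in auto)
  ultimately show ?thesis
    using summable_norm suminf_le[OF dle _ sD] by (fastforce simp: sums_iff)
qed

lemma summable_sq_mult_norm_convolution:
  fixes a b :: "nat \<Rightarrow> 'a::real_normed_vector"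
  assumes sa: "summable (\<lambda>k. norm (a k) * \<rho> ^ k)" and sb: "summable (\<lambda>k. norm (b k) * \<rho> ^ k)"
    and r: "0 < r" "r < \<rho>"
  shows "summable (\<lambda>m. real m ^ 2 * (\<Sum>j\<le>m. norm (a j) * norm (b (m - j))) * r ^ m)"
proof -
  define C where "C m = (\<Sum>j\<le>m. norm (a j) * norm (b (m - j)))" for m
  have "summable (\<lambda>m. C m * \<rho> ^ m)"
    using sums_powser_mult[of "\<lambda>k. norm (a k)" \<rho> "\<lambda>k. norm (b k)"] sa sb r
    unfolding C_def by (simp add: abs_mult sums_iff)
  moreover have "(\<lambda>m. real m ^ 2 * (r / \<rho>) ^ m) \<longlonglongrightarrow> 0"
    using r by real_asymp
  then have "eventually (\<lambda>m. real m ^ 2 * (r / \<rho>) ^ m < 1) sequentially"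
    by (rule order_tendstoD) simp
  then have "eventually (\<lambda>m. norm (real m ^ 2 * C m * r ^ m) \<le> C m * \<rho> ^ m) sequentially"
  proof (rule eventually_mono)
    fix m
    assume small: "real m ^ 2 * (r / \<rho>) ^ m < 1"
    have C: "0 \<le> C m" unfolding C_def by (intro sum_nonneg) auto
    have "real m ^ 2 * C m * r ^ m = (real m ^ 2 * (r / \<rho>) ^ m) * (C m * \<rho> ^ m)"
      using r by (simp add: power_divide field_simps)
    also have "\<dots> \<le> 1 * (C m * \<rho> ^ m)"
      using small C r by (intro mult_right_mono) auto
    finally show "norm (real m ^ 2 * C m * r ^ m) \<le> C m * \<rho> ^ m"
      using C r by simp
  qed
  ultimately show ?thesis
    unfolding C_def by (rule summable_comparison_test_ev[rotated])
qed

lemma norm_genuine_BD_mult_defect_le: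
  fixes f g :: "complex \<Rightarrow> complex" and a b :: "nat \<Rightarrow> complex"
  assumes R: "R > 1"
    and fs: "\<And>z. z \<in> ball 0 R \<Longrightarrow> (\<lambda>k. a k * z ^ k) sums f z"
    and gs: "\<And>z. z \<in> ball 0 R \<Longrightarrow> (\<lambda>k. b k * z ^ k) sums g z"
    and r: "1 \<le> r" "r < R" and z: "norm z \<le> r" and n: "n \<ge> 1"
    and sT: "summable (\<lambda>m. real m ^ 2 * (\<Sum>j\<le>m. norm (a j) * norm (b (m - j))) * r ^ m)"
  shows "norm (genuine_BD n (\<lambda>w. f w * g w) z - genuine_BD n f z * genuine_BD n g z)
    \<le> 4 / real n * (\<Sum>m. real m ^ 2 * (\<Sum>j\<le>m. norm (a j) * norm (b (m - j))) * r ^ m)"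
proof -
  have abs_conv: "summable (\<lambda>k. norm (c k * w ^ k))"
    if "\<And>z. z \<in> ball 0 R \<Longrightarrow> (\<lambda>k. c k * z ^ k) sums h z" "norm w < R" for c h and w :: complex
    using summable_norm_powser_coeff[where \<rho> = "norm w", OF that(1)] that(2)
    by (simp add: norm_mult norm_power)
  have "(\<lambda>m. (\<Sum>j\<le>m. a j * b (m - j)) * w ^ m) sums (f w * g w)" if "w \<in> ball 0 R" for w
    using sums_powser_mult[OF abs_conv[OF fs] abs_conv[OF gs]] fs[OF that] gs[OF that] that
    by (simp add: sums_iff)
  then have sc: "(\<lambda>m. (\<Sum>j\<le>m. a j * b (m - j)) * BD_monomial n m z) sums genuine_BD n (\<lambda>w. f w * g w) z"
    by (rule sums_genuine_BD[OF R _ n])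
  have sU: "summable (\<lambda>j. norm (c j * BD_monomial n j z))"
    if "\<And>z. z \<in> ball 0 R \<Longrightarrow> (\<lambda>k. c k * z ^ k) sums h z" for c h
  proof (rule summable_comparison_test'[OF summable_norm_powser_coeff[where \<rho> = r, OF that]])
    show "norm (norm (c j * BD_monomial n j z)) \<le> norm (c j) * r ^ j" for j
      using norm_BD_monomial_le[OF n z r(1)] by (simp add: norm_mult mult_left_mono)
  qed (use r in auto)
  have "norm (genuine_BD n (\<lambda>w. f w * g w) z - genuine_BD n f z * genuine_BD n g z)
      \<le> (\<Sum>m. (\<Sum>j\<le>m. norm (a j) * norm (b (m - j))) * (4 / real n * real m ^ 2 * r ^ m))"
    using norm_suminf_mult_defect_le[OF sU[OF fs] sU[OF gs] sc norm_BD_monomial_mult_defect_le[OF n z r(1)]]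
      summable_mult[OF sT, of "4 / real n"]
      sums_unique[OF sums_genuine_BD[OF R fs n]] sums_unique[OF sums_genuine_BD[OF R gs n]]
    by (simp add: mult_ac)
  also have "\<dots> = 4 / real n * (\<Sum>m. real m ^ 2 * (\<Sum>j\<le>m. norm (a j) * norm (b (m - j))) * r ^ m)"
    using suminf_mult[OF sT, of "4 / real n"] by (simp add: mult_ac)
  finally show ?thesis .
qed

theorem theorem5p1:
  fixes R r :: real and f g :: "complex \<Rightarrow> complex" and a b :: "nat \<Rightarrow> complex"
  assumes "R > 1"
    and "f holomorphic_on ball 0 R" and "g holomorphic_on ball 0 R"
    and "\<And>z. z \<in> ball 0 R \<Longrightarrow> (\<lambda>k. a k * z ^ k) sums f z"
    and "\<And>z. z \<in> ball 0 R \<Longrightarrow> (\<lambda>k. b k * z ^ k) sums g z"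
    and "1 \<le> r" and "r < R"
  shows "summable (\<lambda>m. real m ^ 2 * (\<Sum>j\<le>m. norm (a j) * norm (b (m - j))) * r ^ m)
    \<and> (\<forall>n::nat. n \<ge> 1 \<longrightarrow>
         disk_norm r (\<lambda>z. genuine_BD n (\<lambda>w. f w * g w) z - genuine_BD n f z * genuine_BD n g z)
         \<le> 4 / real n * (\<Sum>m. real m ^ 2 * (\<Sum>j\<le>m. norm (a j) * norm (b (m - j))) * r ^ m))"
proof (intro conjI allI impI)
  note R = assms(1) and fs = assms(4) and gs = assms(5) and r = assms(6,7)
  define \<rho> where "\<rho> = (r + R) / 2"
  have \<rho>: "r < \<rho>" "\<rho> < R" using r by (auto simp: \<rho>_def)
  show sT: "summable (\<lambda>m. real m ^ 2 * (\<Sum>j\<le>m. norm (a j) * norm (b (m - j))) * r ^ m)"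
    using \<rho> r by (intro summable_sq_mult_norm_convolution summable_norm_powser_coeff[OF fs]
      summable_norm_powser_coeff[OF gs]) auto
  fix n :: nat
  assume n: "n \<ge> 1"
  show "disk_norm r (\<lambda>z. genuine_BD n (\<lambda>w. f w * g w) z - genuine_BD n f z * genuine_BD n g z)
      \<le> 4 / real n * (\<Sum>m. real m ^ 2 * (\<Sum>j\<le>m. norm (a j) * norm (b (m - j))) * r ^ m)"
    unfolding disk_norm_def using r norm_genuine_BD_mult_defect_le[OF R fs gs r _ n sT]
    by (intro cSup_least) auto
qed

end
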